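(* Let $G$ be a locally Hausdorff, locally compact groupoid and let $K\subset G^{(0)}$ be compact. Then there is a neighborhood $W$ of $G^{(0)}$ in $G$ such that $W\cap r^{-1}(K)$ is Hausdorff.
   Context: A locally Hausdorff, locally compact groupoid: groupoid operations continuous, $G^{(0)}$ Hausdorff, each point has a compact Hausdorff neighborhood, range map $r$ open. *)

theory Defs
  imports "HOL-Analysis.Analysis"
begin

text \<open>The arrows form the
  carrier of the abstract topology T; G0 is the unit space; r, s are the range and
  source maps; m is the (partial) multiplication, defined on composable pairs
  (g,h) with s g = r h; i is the inverse.\<close>

definition composable_pairs ::
  "'a topology \<Rightarrow> ('a \<Rightarrow> 'a) \<Rightarrow> ('a \<Rightarrow> 'a) \<Rightarrow> ('a \<times> 'a) set" where
  "composable_pairs T r s = {(g, h). g \<in> topspace T \<and> h \<in> topspace T \<and> s g = r h}"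

definition groupoid ::
  "'a topology \<Rightarrow> 'a set \<Rightarrow> ('a \<Rightarrow> 'a) \<Rightarrow> ('a \<Rightarrow> 'a) \<Rightarrow> ('a \<Rightarrow> 'a \<Rightarrow> 'a) \<Rightarrow> ('a \<Rightarrow> 'a) \<Rightarrow> bool"
  where
  "groupoid T G0 r s m i \<longleftrightarrow>
     G0 \<subseteq> topspace T \<and>
     (\<forall>g\<in>topspace T. r g \<in> G0 \<and> s g \<in> G0) \<and>
     (\<forall>u\<in>G0. r u = u \<and> s u = u) \<and>
     (\<forall>g\<in>topspace T. \<forall>h\<in>topspace T. s g = r h \<longrightarrow>
        m g h \<in> topspace T \<and> r (m g h) = r g \<and> s (m g h) = s h) \<and>
     (\<forall>g\<in>topspace T. \<forall>h\<in>topspace T. \<forall>k\<in>topspace T. s g = r h \<longrightarrow> s h = r k \<longrightarrow>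
        m (m g h) k = m g (m h k)) \<and>
     (\<forall>g\<in>topspace T. m (r g) g = g \<and> m g (s g) = g) \<and>
     (\<forall>g\<in>topspace T. i g \<in> topspace T \<and> r (i g) = s g \<and> s (i g) = r g \<and>
        m g (i g) = r g \<and> m (i g) g = s g)"

definition topological_groupoid ::
  "'a topology \<Rightarrow> 'a set \<Rightarrow> ('a \<Rightarrow> 'a) \<Rightarrow> ('a \<Rightarrow> 'a) \<Rightarrow> ('a \<Rightarrow> 'a \<Rightarrow> 'a) \<Rightarrow> ('a \<Rightarrow> 'a) \<Rightarrow> bool"
  where
  "topological_groupoid T G0 r s m i \<longleftrightarrow>
     groupoid T G0 r s m i \<and>
     continuous_map T (subtopology T G0) r \<and>
     continuous_map T (subtopology T G0) s \<and>
     continuous_map T T i \<and>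
     continuous_map (subtopology (prod_topology T T) (composable_pairs T r s)) T
        (\<lambda>(g, h). m g h)"

definition locally_Hausdorff_space :: "'a topology \<Rightarrow> bool" where
  "locally_Hausdorff_space T \<longleftrightarrow>
     (\<forall>x\<in>topspace T. \<exists>U. openin T U \<and> x \<in> U \<and> Hausdorff_space (subtopology T U))"

definition has_compact_Hausdorff_nbhds :: "'a topology \<Rightarrow> bool" where
  "has_compact_Hausdorff_nbhds T \<longleftrightarrow>
     (\<forall>x\<in>topspace T. \<exists>U C. openin T U \<and> x \<in> U \<and> U \<subseteq> C \<and>
        compactin T C \<and> Hausdorff_space (subtopology T C))"

definition lh_lc_groupoid ::
  "'a topology \<Rightarrow> 'a set \<Rightarrow> ('a \<Rightarrow> 'a) \<Rightarrow> ('a \<Rightarrow> 'a) \<Rightarrow> ('a \<Rightarrow> 'a \<Rightarrow> 'a) \<Rightarrow> ('a \<Rightarrow> 'a) \<Rightarrow> bool"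
  where
  "lh_lc_groupoid T G0 r s m i \<longleftrightarrow>
     topological_groupoid T G0 r s m i \<and>
     locally_Hausdorff_space T \<and>
     Hausdorff_space (subtopology T G0) \<and>
     has_compact_Hausdorff_nbhds T \<and>
     open_map T (subtopology T G0) r"

end

theory Submission
  imports Defs
begin

(* For a compact K in the Hausdorff unit space, every u in K has an
   open Hausdorff neighbourhood U_u in G.  Since K is compact Hausdorff, hence regular,
   finitely many sets C_u (u in a finite F), closed in K with C_u \<subseteq> U_u, cover K.  Put
     W = {g. for all u in F, g \<in> U_u or r g \<notin> C_u}.
   W is open (each r^{-1}(C_u) is closed) and contains G0 (r u = u on units).  Two distinct
   arrows of W \<inter> r^{-1}(K) are separated either by r, whose target G0 is Hausdorff, or,
   when r g = r h \<in> C_u, inside the Hausdorff open set U_u that contains both. *)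

lemma separate_in_open_Hausdorff_subspace:
  assumes "openin X U" "Hausdorff_space (subtopology X U)"
    and "x \<in> U" "y \<in> U" "x \<noteq> y" "x \<in> topspace X" "y \<in> topspace X"
  shows "\<exists>A B. openin X A \<and> openin X B \<and> x \<in> A \<and> y \<in> B \<and> disjnt A B"
proof -
  have "x \<in> topspace (subtopology X U)" "y \<in> topspace (subtopology X U)"
    using assms(3-7) by auto
  then obtain A B where AB: "openin (subtopology X U) A" "openin (subtopology X U) B"
    "x \<in> A" "y \<in> B" "disjnt A B"
    using assms(2,5) unfolding Hausdorff_space_def by blast
  then have "openin X A" "openin X B"
    by (simp_all add: openin_open_subtopology[OF assms(1)])
  with AB show ?thesis by blast
qed

lemma Hausdorff_subtopology_by_fibres:
  assumes f: "continuous_map X Y f" and hY: "Hausdorff_space Y"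
    and fibre: "\<And>x y. \<lbrakk>x \<in> S; y \<in> S; x \<in> topspace X; y \<in> topspace X; x \<noteq> y; f x = f y\<rbrakk>
               \<Longrightarrow> \<exists>A B. openin X A \<and> openin X B \<and> x \<in> A \<and> y \<in> B \<and> disjnt A B"
  shows "Hausdorff_space (subtopology X S)"
  unfolding Hausdorff_space_def
proof (intro allI impI)
  fix x y assume "x \<in> topspace (subtopology X S) \<and> y \<in> topspace (subtopology X S) \<and> x \<noteq> y"
  then have x: "x \<in> S" "x \<in> topspace X" and y: "y \<in> S" "y \<in> topspace X" and "x \<noteq> y"
    by auto
  have "\<exists>A B. openin X A \<and> openin X B \<and> x \<in> A \<and> y \<in> B \<and> disjnt A B"
  proof (cases "f x = f y")
    case True
    then show ?thesis using fibre x y \<open>x \<noteq> y\<close> by blast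
  next
    case False
    have "f x \<in> topspace Y" "f y \<in> topspace Y"
      using continuous_map_image_subset_topspace[OF f] x(2) y(2) by blast+
    then obtain A B where AB: "openin Y A" "openin Y B" "f x \<in> A" "f y \<in> B" "disjnt A B"
      using hY False unfolding Hausdorff_space_def by blast
    let ?A = "{z \<in> topspace X. f z \<in> A}" and ?B = "{z \<in> topspace X. f z \<in> B}"
    have "openin X ?A" "openin X ?B"
      using openin_continuous_map_preimage[OF f] AB(1,2) by blast+
    moreover have "x \<in> ?A" "y \<in> ?B" using AB(3,4) x(2) y(2) by simp_all
    moreover have "disjnt ?A ?B" using AB(5) by (auto simp: disjnt_def)
    ultimately show ?thesis by blast
  qed
  then obtain A B where AB: "openin X A" "openin X B" "x \<in> A" "y \<in> B" "disjnt A B"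
    by blast
  have "openin (subtopology X S) (S \<inter> A)" "openin (subtopology X S) (S \<inter> B)"
    using AB(1,2) by (simp_all add: openin_subtopology_Int2)
  moreover have "disjnt (S \<inter> A) (S \<inter> B)" using AB(5) by (auto simp: disjnt_def)
  ultimately show "\<exists>U V. openin (subtopology X S) U \<and> openin (subtopology X S) V
               \<and> x \<in> U \<and> y \<in> V \<and> disjnt U V"
    using x(1) y(1) AB(3,4) by blast
qed

lemma compact_regular_finite_closed_refinement:
  assumes "compact_space X" "regular_space X"
    and U: "\<And>x. x \<in> topspace X \<Longrightarrow> openin X (U x) \<and> x \<in> U x"
  obtains F C where "finite F" "F \<subseteq> topspace X"
    "\<And>x. x \<in> F \<Longrightarrow> closedin X (C x) \<and> C x \<subseteq> U x" "topspace X \<subseteq> (\<Union>x\<in>F. C x)"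
proof -
  have "\<exists>C. closedin X C \<and> x \<in> X interior_of C \<and> C \<subseteq> U x"
    if x: "x \<in> topspace X" for x
  proof -
    obtain V C where "openin X V" "closedin X C" "x \<in> V" "V \<subseteq> C" "C \<subseteq> U x"
      using assms(2) U[OF x] unfolding neighbourhood_base_of_closedin[symmetric]
        neighbourhood_base_of by meson
    then show ?thesis using interior_of_maximal by blast
  qed
  then obtain C where C: "\<forall>x\<in>topspace X. closedin X (C x) \<and> x \<in> X interior_of C x \<and> C x \<subseteq> U x"
    by (metis (no_types))
  define I where "I x = X interior_of C x" for x
  have "compactin X (topspace X)" using assms(1) compact_space_def by blast
  moreover have "\<forall>B\<in>I ` topspace X. openin X B" by (simp add: I_def)
  moreover have "topspace X \<subseteq> \<Union>(I ` topspace X)" using C by (auto simp: I_def)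
  ultimately obtain F' where F': "finite F'" "F' \<subseteq> I ` topspace X" "topspace X \<subseteq> \<Union>F'"
    unfolding compactin_def by meson
  obtain F where F: "F \<subseteq> topspace X" "finite F" "F' = I ` F"
    using finite_subset_image[OF F'(1,2)] by blast
  have IC: "I x \<subseteq> C x" for x unfolding I_def by (rule interior_of_subset)
  have "topspace X \<subseteq> (\<Union>x\<in>F. I x)" using F'(3) F(3) by simp
  also have "\<dots> \<subseteq> (\<Union>x\<in>F. C x)" by (rule UN_mono) (simp_all add: IC)
  finally have "topspace X \<subseteq> (\<Union>x\<in>F. C x)" .
  moreover have "\<And>x. x \<in> F \<Longrightarrow> closedin X (C x) \<and> C x \<subseteq> U x" using C F(1) by blast
  ultimately show ?thesis using that F(1,2) by blast
qed

lemma openin_escape_set: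
  assumes f: "continuous_map X Y f" and "finite F"
    and UC: "\<And>u. u \<in> F \<Longrightarrow> openin X (U u) \<and> closedin Y (C u)"
  shows "openin X {x \<in> topspace X. \<forall>u\<in>F. x \<in> U u \<or> f x \<notin> C u}"
proof -
  have "closedin X (\<Union>u\<in>F. {x \<in> topspace X. f x \<in> C u} - U u)"
    using \<open>finite F\<close> UC closedin_continuous_map_preimage[OF f]
    by (intro closedin_Union) auto
  moreover have "{x \<in> topspace X. \<forall>u\<in>F. x \<in> U u \<or> f x \<notin> C u}
               = topspace X - (\<Union>u\<in>F. {x \<in> topspace X. f x \<in> C u} - U u)"
    by blast
  ultimately show ?thesis by (simp add: openin_diff)
qed

lemma Hausdorff_near_retraction:
  assumes lh: "locally_Hausdorff_space X" and ZX: "Z \<subseteq> topspace X"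
    and hZ: "Hausdorff_space (subtopology X Z)"
    and rc: "continuous_map X (subtopology X Z) r" and runit: "\<And>u. u \<in> Z \<Longrightarrow> r u = u"
    and KZ: "K \<subseteq> Z" and cK: "compactin X K"
  obtains W where "openin X W" "Z \<subseteq> W"
    "Hausdorff_space (subtopology X (W \<inter> {g \<in> topspace X. r g \<in> K}))"
proof -
  have KX: "K \<subseteq> topspace X" using KZ ZX by blast
  let ?K = "subtopology X K"
  have KZK: "subtopology (subtopology X Z) K = ?K"
    using KZ by (simp add: subtopology_subtopology inf.absorb2)
  have tK: "topspace ?K = K" using KX by auto
  have cptK: "compact_space ?K" using cK by (simp add: compact_space_subtopology)
  have "Hausdorff_space ?K" using Hausdorff_space_subtopology[OF hZ, of K] KZK by simp
  with cptK have regK: "regular_space ?K" by (rule compact_Hausdorff_imp_regular_space)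
  have "\<forall>u\<in>K. \<exists>V. openin X V \<and> u \<in> V \<and> Hausdorff_space (subtopology X V)"
    using lh KX unfolding locally_Hausdorff_space_def by blast
  then obtain U where U: "\<forall>u\<in>K. openin X (U u) \<and> u \<in> U u \<and> Hausdorff_space (subtopology X (U u))"
    by (rule bchoice[THEN exE])
  have nbhd: "openin ?K (U u \<inter> K) \<and> u \<in> U u \<inter> K" if "u \<in> topspace ?K" for u
    using U that by (auto simp: openin_subtopology)
  obtain F C where F: "finite F" "F \<subseteq> topspace ?K"
    and C: "\<And>u. u \<in> F \<Longrightarrow> closedin ?K (C u) \<and> C u \<subseteq> U u \<inter> K"
    and cover: "topspace ?K \<subseteq> (\<Union>u\<in>F. C u)"
    using compact_regular_finite_closed_refinement[OF cptK regK nbhd] by metis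
  \<comment> \<open>K is closed in the Hausdorff space Z, hence so is each C u.\<close>
  have KclZ: "closedin (subtopology X Z) K"
    using compactin_imp_closedin[OF hZ] KZ cK by (simp add: compactin_subtopology)
  have UC: "openin X (U u) \<and> closedin (subtopology X Z) (C u)" if "u \<in> F" for u
    using closedin_trans_full[OF _ KclZ] C[OF that] KZK U F(2) that tK by auto
  define W where "W = {g \<in> topspace X. \<forall>u\<in>F. g \<in> U u \<or> r g \<notin> C u}"
  have "openin X W" unfolding W_def using openin_escape_set[OF rc F(1) UC] .
  moreover have "Z \<subseteq> W"
  proof
    fix g assume g: "g \<in> Z"
    have "g \<in> U u \<or> r g \<notin> C u" if "u \<in> F" for u using C[OF that] runit[OF g] by auto
    then show "g \<in> W" using g ZX unfolding W_def by auto
  qed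
  moreover have "Hausdorff_space (subtopology X (W \<inter> {g \<in> topspace X. r g \<in> K}))"
  proof (rule Hausdorff_subtopology_by_fibres[OF rc hZ])
    fix x y assume xy: "x \<in> W \<inter> {g \<in> topspace X. r g \<in> K}" "y \<in> W \<inter> {g \<in> topspace X. r g \<in> K}"
      "x \<in> topspace X" "y \<in> topspace X" "x \<noteq> y" "r x = r y"
    \<comment> \<open>Points with the same image in C u both lie in the Hausdorff open set U u.\<close>
    have "r x \<in> K" using xy(1) by simp
    then obtain u where u: "u \<in> F" "r x \<in> C u" using cover tK by blast
    have "x \<in> U u" "y \<in> U u" using xy(1,2,6) u unfolding W_def by auto
    moreover have "openin X (U u)" "Hausdorff_space (subtopology X (U u))"
      using U u(1) F(2) tK by auto
    ultimately show "\<exists>A B. openin X A \<and> openin X B \<and> x \<in> A \<and> y \<in> B \<and> disjnt A B"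
      using separate_in_open_Hausdorff_subspace xy(3-5) by metis
  qed
  ultimately show ?thesis using that by blast
qed

text \<open>The theorem: in a locally Hausdorff, locally compact groupoid the range map is a
  continuous retraction of G onto the Hausdorff unit space G0.\<close>

theorem mainTheorem5:
  fixes T :: "'a topology" and G0 :: "'a set" and r s i :: "'a \<Rightarrow> 'a"
    and m :: "'a \<Rightarrow> 'a \<Rightarrow> 'a" and K :: "'a set"
  assumes "lh_lc_groupoid T G0 r s m i"
    and "K \<subseteq> G0" and "compactin T K"
  shows "\<exists>W. W \<subseteq> topspace T \<and> (\<exists>V. openin T V \<and> G0 \<subseteq> V \<and> V \<subseteq> W) \<and>
           Hausdorff_space (subtopology T (W \<inter> {g \<in> topspace T. r g \<in> K}))"
proof -
  have grp: "groupoid T G0 r s m i" and rc: "continuous_map T (subtopology T G0) r"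
    and lh: "locally_Hausdorff_space T" and hG0: "Hausdorff_space (subtopology T G0)"
    using assms(1) unfolding lh_lc_groupoid_def topological_groupoid_def by auto
  have G0T: "G0 \<subseteq> topspace T" and runit: "\<And>u. u \<in> G0 \<Longrightarrow> r u = u"
    using grp unfolding groupoid_def by auto
  obtain W where W: "openin T W" "G0 \<subseteq> W"
    and hW: "Hausdorff_space (subtopology T (W \<inter> {g \<in> topspace T. r g \<in> K}))"
    using Hausdorff_near_retraction[OF lh G0T hG0 rc runit assms(2,3)] by blast
  have "W \<subseteq> topspace T" using W(1) by (rule openin_subset)
  with W hW show ?thesis by blast
qed

end
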